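(* Let $\Omega$ be finite. Fix $p:\Omega\to(0,1]$ with $\sum_\omega p(\omega)=1$ and $\alpha\in\mathbb R$, and let $K=\{y\in[-\infty,\infty)^\Omega:\langle p,y\rangle\le\alpha\}$. Fix $\varepsilon>0$ and $x\in\mathbb R^\Omega$ with $\langle p,x\rangle=\alpha$. Then there is $\delta\in(0,\varepsilon)$ such that no point of $K\cap B(x,\delta)$ is weakly dominated by any point of $K\setminus B(x,\varepsilon)$.
   Context: $\langle f,g\rangle=\sum_\omega f(\omega)g(\omega)$ (with $a\cdot0=0$ for extended reals $a$). $\|z\|_\infty=\max_{\omega}|z(\omega)|$ for $z\in[-\infty,\infty)^\Omega$, and $B(z,r)=\{z':\|z'-z\|_\infty<r\}$. A point $w$ weakly dominates $y$ if $y(\omega)\le w(\omega)$ for all $\omega\in\Omega$. *)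

theory Defs
  imports "HOL-Analysis.Analysis"
begin

text \<open>Points of [-\<infinity>,\<infinity>)^\<Omega> are functions \<Omega> \<Rightarrow> ereal never taking the value \<infinity>.\<close>
definition ext_pts :: "('w \<Rightarrow> ereal) set" where
  "ext_pts = {y. \<forall>\<omega>. y \<omega> \<noteq> \<infinity>}"

definition pair_e :: "('w::finite \<Rightarrow> real) \<Rightarrow> ('w \<Rightarrow> ereal) \<Rightarrow> ereal" where
  "pair_e f g = (\<Sum>\<omega>\<in>UNIV. (if f \<omega> = 0 then 0 else ereal (f \<omega>) * g \<omega>))"

definition supnorm_e :: "('w::finite \<Rightarrow> ereal) \<Rightarrow> ereal" where
  "supnorm_e z = Max (range (\<lambda>\<omega>. \<bar>z \<omega>\<bar>))"

definition ball_e :: "('w::finite \<Rightarrow> ereal) \<Rightarrow> real \<Rightarrow> ('w \<Rightarrow> ereal) set" where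
  "ball_e z r = {z' \<in> ext_pts. supnorm_e (\<lambda>\<omega>. z' \<omega> - z \<omega>) < ereal r}"

definition K_set :: "('w::finite \<Rightarrow> real) \<Rightarrow> real \<Rightarrow> ('w \<Rightarrow> ereal) set" where
  "K_set p \<alpha> = {y \<in> ext_pts. pair_e p y \<le> ereal \<alpha>}"

definition weakly_dominates :: "('w \<Rightarrow> ereal) \<Rightarrow> ('w \<Rightarrow> ereal) \<Rightarrow> bool" where
  "weakly_dominates w y \<longleftrightarrow> (\<forall>\<omega>. y \<omega> \<le> w \<omega>)"

end

theory Submission
  imports Defs
begin

text \<open>Let \<open>m\<close> be the smallest weight and \<open>\<delta> = m \<epsilon> / 2\<close>. A point \<open>y\<close> of the small ball is
  real-valued with \<open>y \<ge> x - \<delta>\<close>, so any \<open>w \<ge> y\<close> in \<open>K\<close> is real-valued with \<open>w - x \<ge> -\<delta>\<close>.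
  If \<open>w\<close> lies outside the large ball, some coordinate has \<open>w \<omega>\<^sub>0 - x \<omega>\<^sub>0 \<ge> \<epsilon>\<close>, and then
  \<open>\<langle>p, w - x\<rangle> \<ge> p \<omega>\<^sub>0 \<epsilon> - \<delta> \<ge> m \<epsilon> / 2 > 0\<close>, contradicting \<open>\<langle>p, w\<rangle> \<le> \<alpha> = \<langle>p, x\<rangle>\<close>.\<close>

lemma abs_le_supnorm_e: "\<bar>z \<omega>\<bar> \<le> supnorm_e z"
  unfolding supnorm_e_def by (intro Max_ge) auto

lemma supnorm_e_attained: "\<exists>\<omega>. supnorm_e z = \<bar>z \<omega>\<bar>"
proof -
  have "supnorm_e z \<in> range (\<lambda>\<omega>. \<bar>z \<omega>\<bar>)"
    unfolding supnorm_e_def by (intro Max_in) auto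
  then show ?thesis by auto
qed

lemma supnorm_e_less_iff: "supnorm_e z < r \<longleftrightarrow> (\<forall>\<omega>. \<bar>z \<omega>\<bar> < r)"
  using abs_le_supnorm_e supnorm_e_attained by (metis order.strict_trans1)

lemma mem_ball_e_ereal_iff:
  "y \<in> ball_e (\<lambda>\<omega>. ereal (x \<omega>)) r \<longleftrightarrow>
     (\<exists>yr. y = (\<lambda>\<omega>. ereal (yr \<omega>)) \<and> (\<forall>\<omega>. \<bar>yr \<omega> - x \<omega>\<bar> < r))"
proof
  assume "y \<in> ball_e (\<lambda>\<omega>. ereal (x \<omega>)) r"
  then have close: "\<bar>y \<omega> - ereal (x \<omega>)\<bar> < ereal r" for \<omega>
    by (simp add: ball_e_def supnorm_e_less_iff)
  have "y \<omega> = ereal (real_of_ereal (y \<omega>)) \<and> \<bar>real_of_ereal (y \<omega>) - x \<omega>\<bar> < r" for \<omega>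
    using close[of \<omega>] by (cases "y \<omega>") auto
  then show "\<exists>yr. y = (\<lambda>\<omega>. ereal (yr \<omega>)) \<and> (\<forall>\<omega>. \<bar>yr \<omega> - x \<omega>\<bar> < r)"
    by (intro exI[of _ "\<lambda>\<omega>. real_of_ereal (y \<omega>)"]) auto
qed (auto simp: ball_e_def ext_pts_def supnorm_e_less_iff)

lemma pair_e_ereal: "pair_e f (\<lambda>\<omega>. ereal (g \<omega>)) = ereal (\<Sum>\<omega>\<in>UNIV. f \<omega> * g \<omega>)"
  unfolding pair_e_def sum_ereal[symmetric] by (intro sum.cong) auto

lemma ereal_mem_K_set_iff:
  "(\<lambda>\<omega>. ereal (g \<omega>)) \<in> K_set p \<alpha> \<longleftrightarrow> (\<Sum>\<omega>\<in>UNIV. p \<omega> * g \<omega>) \<le> \<alpha>"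
  by (simp add: K_set_def ext_pts_def pair_e_ereal)

lemma weakly_dominates_ereal_imp_real:
  assumes "weakly_dominates w (\<lambda>\<omega>. ereal (yr \<omega>))" and "w \<in> ext_pts"
  shows "\<exists>wr. w = (\<lambda>\<omega>. ereal (wr \<omega>)) \<and> (\<forall>\<omega>. yr \<omega> \<le> wr \<omega>)"
proof -
  have "w \<omega> = ereal (real_of_ereal (w \<omega>)) \<and> yr \<omega> \<le> real_of_ereal (w \<omega>)" for \<omega>
  proof -
    have "ereal (yr \<omega>) \<le> w \<omega>" "w \<omega> \<noteq> \<infinity>"
      using assms by (auto simp: weakly_dominates_def ext_pts_def)
    then show ?thesis by (cases "w \<omega>") auto
  qed
  then show ?thesis by (intro exI[of _ "\<lambda>\<omega>. real_of_ereal (w \<omega>)"]) auto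
qed

lemma sum_weighted_ge_single_term:
  fixes p d :: "'a \<Rightarrow> real"
  assumes "finite A" "\<omega>\<^sub>0 \<in> A" "\<And>\<omega>. \<omega> \<in> A \<Longrightarrow> 0 \<le> p \<omega>" "sum p A = 1"
    and "\<And>\<omega>. \<omega> \<in> A \<Longrightarrow> -\<delta> \<le> d \<omega>"
  shows "p \<omega>\<^sub>0 * (d \<omega>\<^sub>0 + \<delta>) - \<delta> \<le> (\<Sum>\<omega>\<in>A. p \<omega> * d \<omega>)"
proof -
  have "p \<omega>\<^sub>0 * (d \<omega>\<^sub>0 + \<delta>) \<le> (\<Sum>\<omega>\<in>A. p \<omega> * (d \<omega> + \<delta>))"
  proof (intro member_le_sum)
    show "0 \<le> p \<omega> * (d \<omega> + \<delta>)" if "\<omega> \<in> A - {\<omega>\<^sub>0}" for \<omega>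
      using that assms(3,5)[of \<omega>] by simp
  qed (use assms in auto)
  also have "\<dots> = (\<Sum>\<omega>\<in>A. p \<omega> * d \<omega>) + \<delta>"
    using assms(4) by (simp add: distrib_left sum.distrib sum_distrib_right[symmetric])
  finally show ?thesis by simp
qed

lemma sum_weighted_less_if_far_above:
  fixes p w x :: "'a::finite \<Rightarrow> real"
  assumes "\<And>\<omega>. 0 \<le> p \<omega>" "(\<Sum>\<omega>\<in>UNIV. p \<omega>) = 1"
    and "\<And>\<omega>. x \<omega> - \<delta> \<le> w \<omega>" "0 \<le> \<delta>" "\<delta> < \<epsilon>" "\<delta> < p \<omega>\<^sub>0 * \<epsilon>"
    and "\<epsilon> \<le> \<bar>w \<omega>\<^sub>0 - x \<omega>\<^sub>0\<bar>"
  shows "(\<Sum>\<omega>\<in>UNIV. p \<omega> * x \<omega>) < (\<Sum>\<omega>\<in>UNIV. p \<omega> * w \<omega>)"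
proof -
  have far_above: "\<epsilon> \<le> w \<omega>\<^sub>0 - x \<omega>\<^sub>0"
    using assms(3)[of \<omega>\<^sub>0] assms(5,7) by linarith
  have "p \<omega>\<^sub>0 * \<epsilon> \<le> p \<omega>\<^sub>0 * (w \<omega>\<^sub>0 - x \<omega>\<^sub>0 + \<delta>)"
    using far_above assms(1,4) by (intro mult_left_mono) auto
  also have "\<dots> - \<delta> \<le> (\<Sum>\<omega>\<in>UNIV. p \<omega> * (w \<omega> - x \<omega>))"
    using assms(1-3) by (intro sum_weighted_ge_single_term) (auto simp: algebra_simps)
  finally have "0 < (\<Sum>\<omega>\<in>UNIV. p \<omega> * (w \<omega> - x \<omega>))"
    using assms(6) by linarith
  then show ?thesis by (simp add: right_diff_distrib sum_subtractf)
qed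

lemma exists_radius_below_weighted:
  fixes p :: "'a::finite \<Rightarrow> real"
  assumes "\<And>\<omega>. 0 < p \<omega> \<and> p \<omega> \<le> 1" and "0 < \<epsilon>"
  shows "\<exists>\<delta>. 0 < \<delta> \<and> \<delta> < \<epsilon> \<and> (\<forall>\<omega>. \<delta> < p \<omega> * \<epsilon>)"
proof -
  define m where "m = Min (range p)"
  have m_le: "m \<le> p \<omega>" for \<omega>
    unfolding m_def by (intro Min_le) auto
  have "m \<in> range p"
    unfolding m_def by (intro Min_in) auto
  with assms(1) have m_pos: "0 < m" and m_le_1: "m \<le> 1" by auto
  have below_p: "m * \<epsilon> \<le> p \<omega> * \<epsilon>" for \<omega>
    using m_le assms(2) by (simp add: mult_right_mono)
  have below_\<epsilon>: "m * \<epsilon> \<le> \<epsilon>"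
    using m_pos m_le_1 assms(2) by (simp add: mult_left_le_one_le)
  have pos: "0 < m * \<epsilon>"
    using m_pos assms(2) by simp
  show ?thesis
  proof (intro exI[of _ "m * \<epsilon> / 2"] conjI allI)
    show "m * \<epsilon> / 2 < p \<omega> * \<epsilon>" for \<omega>
      using below_p[of \<omega>] pos by linarith
  qed (use below_\<epsilon> pos in linarith)+
qed

lemma not_weakly_dominates_far_point:
  fixes p x :: "'a::finite \<Rightarrow> real"
  assumes "\<And>\<omega>. 0 \<le> p \<omega>" "(\<Sum>\<omega>\<in>UNIV. p \<omega>) = 1" "(\<Sum>\<omega>\<in>UNIV. p \<omega> * x \<omega>) = \<alpha>"
    and "0 \<le> \<delta>" "\<delta> < \<epsilon>" "\<And>\<omega>. \<delta> < p \<omega> * \<epsilon>"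
    and y: "y \<in> ball_e (\<lambda>\<omega>. ereal (x \<omega>)) \<delta>"
    and w: "w \<in> K_set p \<alpha> - ball_e (\<lambda>\<omega>. ereal (x \<omega>)) \<epsilon>"
  shows "\<not> weakly_dominates w y"
proof
  assume dominates: "weakly_dominates w y"
  obtain yr where y_eq: "y = (\<lambda>\<omega>. ereal (yr \<omega>))" and yr_close: "\<forall>\<omega>. \<bar>yr \<omega> - x \<omega>\<bar> < \<delta>"
    using y mem_ball_e_ereal_iff by blast
  obtain wr where w_eq: "w = (\<lambda>\<omega>. ereal (wr \<omega>))" and yr_le_wr: "\<forall>\<omega>. yr \<omega> \<le> wr \<omega>"
    using weakly_dominates_ereal_imp_real[of w yr] dominates w y_eq by (auto simp: K_set_def)
  obtain \<omega>\<^sub>0 where far: "\<epsilon> \<le> \<bar>wr \<omega>\<^sub>0 - x \<omega>\<^sub>0\<bar>"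
    using w mem_ball_e_ereal_iff[of w x \<epsilon>] w_eq by (auto simp: not_less)
  have wr_lower: "x \<omega> - \<delta> \<le> wr \<omega>" for \<omega>
    using yr_close[rule_format, of \<omega>] yr_le_wr[rule_format, of \<omega>] by (simp add: abs_less_iff)
  have "(\<Sum>\<omega>\<in>UNIV. p \<omega> * x \<omega>) < (\<Sum>\<omega>\<in>UNIV. p \<omega> * wr \<omega>)"
    using assms(1,2) wr_lower assms(4-6) far by (rule sum_weighted_less_if_far_above)
  with w w_eq assms(3) show False
    by (simp add: ereal_mem_K_set_iff)
qed

theorem lemma6:
  fixes p :: "'w::finite \<Rightarrow> real" and \<alpha> \<epsilon> :: real and x :: "'w \<Rightarrow> real"
  assumes "\<And>\<omega>. 0 < p \<omega> \<and> p \<omega> \<le> 1"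
    and "(\<Sum>\<omega>\<in>UNIV. p \<omega>) = 1"
    and "\<epsilon> > 0"
    and "(\<Sum>\<omega>\<in>UNIV. p \<omega> * x \<omega>) = \<alpha>"
  shows "\<exists>\<delta>. 0 < \<delta> \<and> \<delta> < \<epsilon> \<and>
     (\<forall>y \<in> K_set p \<alpha> \<inter> ball_e (\<lambda>\<omega>. ereal (x \<omega>)) \<delta>.
        \<forall>w \<in> K_set p \<alpha> - ball_e (\<lambda>\<omega>. ereal (x \<omega>)) \<epsilon>.
          \<not> weakly_dominates w y)"
proof -
  obtain \<delta> where "0 < \<delta>" "\<delta> < \<epsilon>" "\<And>\<omega>. \<delta> < p \<omega> * \<epsilon>"
    using exists_radius_below_weighted assms(1,3) by blast
  moreover have "\<not> weakly_dominates w y"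
    if "y \<in> K_set p \<alpha> \<inter> ball_e (\<lambda>\<omega>. ereal (x \<omega>)) \<delta>"
      and "w \<in> K_set p \<alpha> - ball_e (\<lambda>\<omega>. ereal (x \<omega>)) \<epsilon>" for y w
    using assms(1,2,4) \<open>0 < \<delta>\<close> \<open>\<delta> < \<epsilon>\<close> \<open>\<And>\<omega>. \<delta> < p \<omega> * \<epsilon>\<close> that
    by (intro not_weakly_dominates_far_point[of p x \<alpha> \<delta> \<epsilon>]) (auto intro: less_imp_le)
  ultimately show ?thesis by blast
qed

end
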